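(* Let $n\ge 4$ and $R=\mathbb{C}[z_1,\dots,z_n]$. Then there exist an integer $m$, an integer $P<n$, and homogeneous polynomials $f_1,\dots,f_P,g\in R$ of degree $m$ with $\{f_1,\dots,f_P,g\}$ linearly independent over $\mathbb{C}$, such that, with $I^+=\langle f_1,\dots,f_P\rangle$, one has $\langle g\rangle_{m+1}\subseteq I^+_{m+1}$.
   Context: For a homogeneous ideal $I\subseteq R$, $I_{d}$ denotes its homogeneous component of degree $d$. *)

theory Defs
  imports Complex_Main "HOL-Library.Poly_Mapping"
begin

text \<open>Polynomials over the complex numbers in countably many variables z_0, z_1, ...:
  a monomial is a finitely supported exponent vector nat =>0 nat, a polynomial a finitely
  supported map from monomials to coefficients.\<close>

type_synonym cpoly = "(nat \<Rightarrow>\<^sub>0 nat) \<Rightarrow>\<^sub>0 complex"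

definition mon_deg :: "(nat \<Rightarrow>\<^sub>0 nat) \<Rightarrow> nat" where
  "mon_deg a = (\<Sum>i\<in>Poly_Mapping.keys a. Poly_Mapping.lookup a i)"

text \<open>The ring R = C[z_1,...,z_n]: polynomials only involving the variables with index < n.\<close>
definition in_R :: "nat \<Rightarrow> cpoly \<Rightarrow> bool" where
  "in_R n p \<longleftrightarrow> (\<forall>a\<in>Poly_Mapping.keys p. Poly_Mapping.keys a \<subseteq> {..<n})"

text \<open>Homogeneous of degree d (the zero polynomial is homogeneous of every degree).\<close>
definition homogeneous :: "nat \<Rightarrow> cpoly \<Rightarrow> bool" where
  "homogeneous d p \<longleftrightarrow> (\<forall>a\<in>Poly_Mapping.keys p. mon_deg a = d)"

definition cmult :: "complex \<Rightarrow> cpoly \<Rightarrow> cpoly" where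
  "cmult c p = Poly_Mapping.single 0 c * p"

definition in_ideal :: "nat \<Rightarrow> (nat \<Rightarrow> cpoly) \<Rightarrow> nat \<Rightarrow> cpoly \<Rightarrow> bool" where
  "in_ideal n f k h \<longleftrightarrow> (\<exists>q. (\<forall>i<k. in_R n (q i)) \<and> h = (\<Sum>i<k. q i * f i))"

end

theory Submission
  imports Defs
begin

(*
  Take m = 2, g = z_0 z_3 and the n - 1 quadrics f_0 = z_0 z_2, f_1 = z_1 z_3,
  f_2 = z_0 z_3 + z_1 z_2 and f_i = z_0 z_(i+1) for 3 <= i < n - 1 (variables are numbered
  from 0).  Each f_i has a monomial occurring in no other f_j and not in g, which gives linear
  independence.  On the other hand every z_j g lies in I+:
    z_0 g = z_0 f_2 - z_1 f_0,  z_1 g = z_0 f_1,  z_2 g = z_3 f_0,  z_3 g = z_3 f_2 - z_2 f_1,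
  and z_j g = z_3 f_(j-1) for j >= 4.  Since g is a monomial, a multiple q g of degree 3 has q
  without constant term, so it is a combination of the z_j g and lies in I+.
*)

definition var_exp :: "nat \<Rightarrow> (nat \<Rightarrow>\<^sub>0 nat)" where
  "var_exp i = Poly_Mapping.single i 1"

definition var :: "nat \<Rightarrow> cpoly" where
  "var i = Poly_Mapping.single (var_exp i) 1"

lemma poly_mapping_sum_singles:
  "p = (\<Sum>k\<in>Poly_Mapping.keys p. Poly_Mapping.single k (Poly_Mapping.lookup p k))"
  by (rule poly_mapping_eqI) (simp add: lookup_sum lookup_single when_def in_keys_iff)

lemma lookup_cmult: "Poly_Mapping.lookup (cmult c p) k = c * Poly_Mapping.lookup p k"
  unfolding cmult_def mult_map_scale_conv_mult[symmetric] by (simp add: map.rep_eq when_def)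

lemma lookup_mult_single_add:
  fixes p :: "('a::cancel_comm_monoid_add \<Rightarrow>\<^sub>0 'b::comm_semiring_1)"
  shows "Poly_Mapping.lookup (p * Poly_Mapping.single \<mu> c) (\<nu> + \<mu>) = Poly_Mapping.lookup p \<nu> * c"
proof -
  have "p * Poly_Mapping.single \<mu> c =
      (\<Sum>k\<in>Poly_Mapping.keys p. Poly_Mapping.single (k + \<mu>) (Poly_Mapping.lookup p k * c))"
    by (subst poly_mapping_sum_singles[of p]) (simp add: sum_distrib_right mult_single)
  then show ?thesis
    by (simp add: lookup_sum lookup_single when_def in_keys_iff)
qed

lemma mon_deg_eq_sum:
  "finite S \<Longrightarrow> Poly_Mapping.keys a \<subseteq> S \<Longrightarrow> mon_deg a = (\<Sum>i\<in>S. Poly_Mapping.lookup a i)"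
  unfolding mon_deg_def by (rule sum.mono_neutral_left) (auto simp: in_keys_iff)

lemma mon_deg_var_exp_add: "mon_deg (var_exp i + var_exp j) = 2"
proof -
  have "mon_deg (var_exp i + var_exp j) = (\<Sum>k\<in>{i, j}. Poly_Mapping.lookup (var_exp i + var_exp j) k)"
    by (rule mon_deg_eq_sum) (use keys_add[of "var_exp i" "var_exp j"] in \<open>auto simp: var_exp_def\<close>)
  then show ?thesis
    by (cases "i = j") (auto simp: var_exp_def lookup_add lookup_single)
qed

lemma var_exp_add_eq_iff:
  "var_exp a + var_exp b = var_exp c + var_exp d \<longleftrightarrow> (a = c \<and> b = d) \<or> (a = d \<and> b = c)"
proof
  assume "var_exp a + var_exp b = var_exp c + var_exp d"
  then have "((1::nat) when a = k) + (1 when b = k) = (1 when c = k) + (1 when d = k)" for k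
    by (metis lookup_add lookup_single var_exp_def)
  from this[of a] this[of b] this[of c] this[of d]
  show "(a = c \<and> b = d) \<or> (a = d \<and> b = c)"
    by (auto simp: when_def split: if_splits)
qed (auto simp: add.commute)

lemma var_mult_var: "var i * var j = Poly_Mapping.single (var_exp i + var_exp j) 1"
  by (simp add: var_def mult_single)

lemma lookup_var_mult_var:
  "Poly_Mapping.lookup (var i * var j) (var_exp a + var_exp b) =
    (if (i = a \<and> j = b) \<or> (i = b \<and> j = a) then 1 else 0)"
  by (simp add: var_mult_var lookup_single when_def var_exp_add_eq_iff)

lemma homogeneous_add: "homogeneous d p \<Longrightarrow> homogeneous d q \<Longrightarrow> homogeneous d (p + q)"
  unfolding homogeneous_def using keys_add[of p q] by blast

lemma homogeneous_var_mult_var: "homogeneous 2 (var i * var j)"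
  by (simp add: var_mult_var homogeneous_def mon_deg_var_exp_add)

lemma in_R_single: "Poly_Mapping.keys a \<subseteq> {..<n} \<Longrightarrow> in_R n (Poly_Mapping.single a c)"
  by (simp add: in_R_def)

lemma in_R_var: "i < n \<Longrightarrow> in_R n (var i)"
  by (simp add: var_def var_exp_def in_R_single)

lemma in_R_0 [simp]: "in_R n 0" and in_R_1 [simp]: "in_R n 1"
  by (simp_all add: in_R_def)

lemma in_R_uminus: "in_R n p \<Longrightarrow> in_R n (- p)"
  by (simp add: in_R_def)

lemma in_R_add: "in_R n p \<Longrightarrow> in_R n q \<Longrightarrow> in_R n (p + q)"
  unfolding in_R_def using keys_add[of p q] by blast

lemma in_R_mult:
  assumes "in_R n p" and "in_R n q"
  shows "in_R n (p * q)"
  unfolding in_R_def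
proof
  fix a assume "a \<in> Poly_Mapping.keys (p * q)"
  then obtain b c where "a = b + c" "b \<in> Poly_Mapping.keys p" "c \<in> Poly_Mapping.keys q"
    using keys_mult by blast
  with assms keys_add[of b c] show "Poly_Mapping.keys a \<subseteq> {..<n}"
    unfolding in_R_def by blast
qed

lemma in_ideal_0: "in_ideal n f k 0"
  unfolding in_ideal_def by (rule exI[of _ "\<lambda>_. 0"]) simp

lemma in_ideal_add:
  assumes "in_ideal n f k a" and "in_ideal n f k b"
  shows "in_ideal n f k (a + b)"
proof -
  from assms obtain qa qb where "\<forall>i<k. in_R n (qa i)" "a = (\<Sum>i<k. qa i * f i)"
    and "\<forall>i<k. in_R n (qb i)" "b = (\<Sum>i<k. qb i * f i)"
    unfolding in_ideal_def by blast
  then show ?thesis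
    unfolding in_ideal_def
    by (intro exI[of _ "\<lambda>i. qa i + qb i"]) (simp add: in_R_add distrib_right sum.distrib)
qed

lemma in_ideal_mult:
  assumes "in_R n r" and "in_ideal n f k a"
  shows "in_ideal n f k (r * a)"
proof -
  from assms obtain q where "\<forall>i<k. in_R n (q i)" "a = (\<Sum>i<k. q i * f i)"
    unfolding in_ideal_def by blast
  with assms(1) show ?thesis
    unfolding in_ideal_def
    by (intro exI[of _ "\<lambda>i. r * q i"]) (simp add: in_R_mult sum_distrib_left mult.assoc)
qed

lemma in_ideal_generator:
  assumes "i < k"
  shows "in_ideal n f k (f i)"
proof -
  have "(\<Sum>j<k. of_bool (j = i) * f j) = f i"
    using assms by simp
  then show ?thesis
    unfolding in_ideal_def by (intro exI[of _ "\<lambda>j. of_bool (j = i)"]) simp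
qed

lemma in_ideal_mult_generator: "i < k \<Longrightarrow> in_R n r \<Longrightarrow> in_ideal n f k (r * f i)"
  by (simp add: in_ideal_generator in_ideal_mult)

lemma in_ideal_diff: "in_ideal n f k a \<Longrightarrow> in_ideal n f k b \<Longrightarrow> in_ideal n f k (a - b)"
  using in_ideal_add[of n f k a "- 1 * b"] in_ideal_mult[of n "- 1" f k b] in_R_uminus[OF in_R_1]
  by simp

lemma in_ideal_sum:
  "finite A \<Longrightarrow> (\<And>x. x \<in> A \<Longrightarrow> in_ideal n f k (u x)) \<Longrightarrow> in_ideal n f k (\<Sum>x\<in>A. u x)"
  by (induction A rule: finite_induct) (auto simp: in_ideal_0 in_ideal_add)

lemma in_ideal_mult_no_constant_term:
  assumes "in_R n q" and "Poly_Mapping.lookup q 0 = 0"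
    and var_mult: "\<And>j. j < n \<Longrightarrow> in_ideal n f k (var j * g)"
  shows "in_ideal n f k (q * g)"
proof -
  have "in_ideal n f k (Poly_Mapping.single b c * g)" if "b \<in> Poly_Mapping.keys q" for b c
  proof -
    have "b \<noteq> 0" using that assms(2) by (auto simp: in_keys_iff)
    then obtain j where j: "j \<in> Poly_Mapping.keys b"
      by (metis all_not_in_conv keys_eq_empty)
    have b_keys: "Poly_Mapping.keys b \<subseteq> {..<n}" using assms(1) that by (auto simp: in_R_def)
    define b' where "b' = Poly_Mapping.update j (Poly_Mapping.lookup b j - 1) b"
    have "b' + var_exp j = b"
      by (rule poly_mapping_eqI)
        (use j in \<open>auto simp: b'_def lookup_add lookup_update var_exp_def lookup_single when_def in_keys_iff\<close>)
    then have "Poly_Mapping.single b c * g = Poly_Mapping.single b' c * (var j * g)"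
      by (simp add: var_def mult_single mult.assoc[symmetric])
    moreover have "in_R n (Poly_Mapping.single b' c)"
      using b_keys j by (intro in_R_single) (auto simp: b'_def keys_update)
    moreover have "j < n" using j b_keys by auto
    ultimately show ?thesis by (metis in_ideal_mult var_mult)
  qed
  then have "in_ideal n f k (\<Sum>b\<in>Poly_Mapping.keys q. Poly_Mapping.single b (Poly_Mapping.lookup q b) * g)"
    by (simp add: in_ideal_sum)
  then show ?thesis
    by (subst poly_mapping_sum_singles[of q]) (simp add: sum_distrib_right)
qed

lemma in_ideal_monomial_degree_succ:
  assumes var_mult: "\<And>j. j < n \<Longrightarrow> in_ideal n f k (var j * Poly_Mapping.single \<mu> 1)"
    and h_in: "in_ideal n (\<lambda>_. Poly_Mapping.single \<mu> 1) 1 h"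
    and h_hom: "homogeneous (mon_deg \<mu> + 1) h"
  shows "in_ideal n f k h"
proof -
  obtain q where q: "in_R n q" "h = q * Poly_Mapping.single \<mu> 1"
    using h_in by (auto simp: in_ideal_def)
  have "\<mu> \<notin> Poly_Mapping.keys h"
    using h_hom by (auto simp: homogeneous_def)
  moreover have "Poly_Mapping.lookup h \<mu> = Poly_Mapping.lookup q 0"
    using lookup_mult_single_add[of q \<mu> 1 0] q(2) by simp
  ultimately have "Poly_Mapping.lookup q 0 = 0" by (simp add: in_keys_iff)
  with q show ?thesis by (simp add: in_ideal_mult_no_constant_term var_mult)
qed

lemma independent_if_dual_monomials:
  fixes P :: nat
  assumes dual: "\<And>i j. i < P \<Longrightarrow> j < P \<Longrightarrow> Poly_Mapping.lookup (f j) (w i) = of_bool (j = i)"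
    and g_dual: "\<And>i. i < P \<Longrightarrow> Poly_Mapping.lookup g (w i) = 0"
    and "g \<noteq> 0"
    and comb: "(\<Sum>i<P. cmult (c i) (f i)) + cmult (c P) g = 0"
  shows "\<forall>i\<le>P. c i = 0"
proof -
  have coeff: "(\<Sum>i<P. c i * Poly_Mapping.lookup (f i) \<mu>) + c P * Poly_Mapping.lookup g \<mu> = 0" for \<mu>
    using arg_cong[OF comb, of "\<lambda>p. Poly_Mapping.lookup p \<mu>"]
    by (simp add: lookup_add lookup_sum lookup_cmult)
  have below: "c i = 0" if "i < P" for i
    using coeff[of "w i"] that
    by (simp add: dual g_dual of_bool_def if_distrib[of "(*) _"] sum.delta cong: if_cong)
  obtain \<mu> where "Poly_Mapping.lookup g \<mu> \<noteq> 0"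
    using \<open>g \<noteq> 0\<close> by (metis poly_mapping_eqI lookup_zero)
  with coeff[of \<mu>] have "c P = 0" by (simp add: below)
  with below show ?thesis by (auto simp: le_less)
qed

definition example_f :: "nat \<Rightarrow> cpoly" where
  "example_f i =
    (if i = 0 then var 0 * var 2
     else if i = 1 then var 1 * var 3
     else if i = 2 then var 0 * var 3 + var 1 * var 2
     else var 0 * var (i + 1))"

definition example_g :: cpoly where
  "example_g = var 0 * var 3"

definition example_dual_exp :: "nat \<Rightarrow> (nat \<Rightarrow>\<^sub>0 nat)" where
  "example_dual_exp i =
    (if i = 0 then var_exp 0 + var_exp 2
     else if i = 1 then var_exp 1 + var_exp 3
     else if i = 2 then var_exp 1 + var_exp 2
     else var_exp 0 + var_exp (i + 1))"

lemma example_f_in_R: "4 \<le> n \<Longrightarrow> i < n - 1 \<Longrightarrow> in_R n (example_f i)"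
  by (auto simp: example_f_def in_R_add in_R_mult in_R_var)

lemma homogeneous_example_f: "homogeneous 2 (example_f i)"
  by (simp add: example_f_def homogeneous_add homogeneous_var_mult_var)

lemma lookup_example_f_dual:
  "Poly_Mapping.lookup (example_f j) (example_dual_exp i) = of_bool (j = i)"
  by (simp add: example_f_def example_dual_exp_def lookup_add lookup_var_mult_var)

lemma lookup_example_g_dual: "Poly_Mapping.lookup example_g (example_dual_exp i) = 0"
  by (simp add: example_g_def example_dual_exp_def lookup_var_mult_var)

lemma example_g_eq_single: "example_g = Poly_Mapping.single (var_exp 0 + var_exp 3) 1"
  by (simp add: example_g_def var_mult_var)

lemma example_g_nonzero: "example_g \<noteq> 0"
  using lookup_var_mult_var[of 0 3 0 3] by (auto simp: example_g_def)

lemma example_g_in_R: "4 \<le> n \<Longrightarrow> in_R n example_g"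
  by (simp add: example_g_def in_R_mult in_R_var)

lemma homogeneous_example_g: "homogeneous 2 example_g"
  by (simp add: example_g_def homogeneous_var_mult_var)

lemma example_independent:
  "(\<Sum>i<P. cmult (c i) (example_f i)) + cmult (c P) example_g = 0 \<Longrightarrow> \<forall>i\<le>P. c i = 0"
  by (rule independent_if_dual_monomials[where w = example_dual_exp])
    (simp_all add: lookup_example_f_dual lookup_example_g_dual example_g_nonzero)

lemma var_mult_example_g_in_ideal:
  assumes "4 \<le> n" and "j < n"
  shows "in_ideal n example_f (n - 1) (var j * example_g)"
proof -
  have R: "in_R n (var i)" if "i < 4" for i
    using that assms by (intro in_R_var) simp
  consider "j = 0" | "j = 1" | "j = 2" | "j = 3" | "4 \<le> j" by linarith
  then show ?thesis
  proof cases
    case 1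
    then have "var j * example_g = var 0 * example_f 2 - var 1 * example_f 0"
      by (simp add: example_f_def example_g_def algebra_simps)
    then show ?thesis using assms R by (auto intro!: in_ideal_diff in_ideal_mult_generator)
  next
    case 2
    then have "var j * example_g = var 0 * example_f 1"
      by (simp add: example_f_def example_g_def algebra_simps)
    then show ?thesis using assms R by (auto intro!: in_ideal_mult_generator)
  next
    case 3
    then have "var j * example_g = var 3 * example_f 0"
      by (simp add: example_f_def example_g_def algebra_simps)
    then show ?thesis using assms R by (auto intro!: in_ideal_mult_generator)
  next
    case 4
    then have "var j * example_g = var 3 * example_f 2 - var 2 * example_f 1"
      by (simp add: example_f_def example_g_def algebra_simps)
    then show ?thesis using assms R by (auto intro!: in_ideal_diff in_ideal_mult_generator)
  next
    case 5
    then have "example_f (j - 1) = var 0 * var j"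
      by (auto simp: example_f_def)
    then have "var j * example_g = var 3 * example_f (j - 1)"
      by (simp add: example_g_def algebra_simps)
    then show ?thesis using assms R 5 by (auto intro!: in_ideal_mult_generator)
  qed
qed

theorem proposition3:
  fixes n :: nat
  assumes "n \<ge> 4"
  shows "\<exists>(m::nat) (P::nat) (f::nat \<Rightarrow> cpoly) (g::cpoly).
    P < n \<and>
    (\<forall>i<P. in_R n (f i) \<and> homogeneous m (f i)) \<and>
    in_R n g \<and> homogeneous m g \<and>
    (\<forall>c::nat \<Rightarrow> complex.
       (\<Sum>i<P. cmult (c i) (f i)) + cmult (c P) g = 0 \<longrightarrow> (\<forall>i\<le>P. c i = 0)) \<and>
    (\<forall>h. in_ideal n (\<lambda>_. g) 1 h \<and> homogeneous (m + 1) h \<longrightarrow> in_ideal n f P h)"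
proof (rule exI[of _ 2], rule exI[of _ "n - 1"], rule exI[of _ example_f], rule exI[of _ example_g],
    intro conjI allI impI)
  show "n - 1 < n" using assms by simp
  show "in_R n (example_f i)" "homogeneous 2 (example_f i)" if "i < n - 1" for i
    using assms that by (simp_all add: example_f_in_R homogeneous_example_f)
  show "in_R n example_g" "homogeneous 2 example_g"
    using assms by (simp_all add: example_g_in_R homogeneous_example_g)
  show "c i = 0"
    if "(\<Sum>i<n - 1. cmult (c i) (example_f i)) + cmult (c (n - 1)) example_g = 0"
      and "i \<le> n - 1" for c i
    using example_independent[OF that(1)] that(2) by blast
  show "in_ideal n example_f (n - 1) h"
    if "in_ideal n (\<lambda>_. example_g) 1 h \<and> homogeneous (2 + 1) h" for h
    using that in_ideal_monomial_degree_succ[OF var_mult_example_g_in_ideal[OF assms,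
        unfolded example_g_eq_single]]
    by (simp add: example_g_eq_single mon_deg_var_exp_add)
qed

end
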